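(* Let $X$ be a separable $F$-space and let $A$ be a densely defined closed linear operator in $X$ such that $A^r$ is a closed operator for every positive integer $r$. Suppose there are a dense subset $X_0\subset D(A^\infty):=\bigcap_{n\ge 0}D(A^n)$ of $X$ and a mapping $B:X_0\to X_0$ such that: (1) $ABx=x$ for all $x\in X_0$; (2) $\sum_{n=1}^\infty A^n x$ converges unconditionally for all $x\in X_0$; (3) $\sum_{n=1}^\infty B^n x$ converges unconditionally for all $x\in X_0$. Then $A$ is frequently hypercyclic.
   Context: An $F$-space is a topological vector space over $\mathbb{K}\in\{\mathbb{R},\mathbb{C}\}$ whose topology is given by a complete translation-invariant metric, equivalently by an $F$-norm $\|\cdot\|$ (satisfying $\|x\|=0\iff x=0$; $\|\lambda x\|\le\|x\|$ for $|\lambda|\le1$; $\lim_{\lambda\to0}\|\lambda x\|=0$; $\|x+y\|\le\|x\|+\|y\|$). A series $\sum_k x_k$ in $X$ converges unconditionally if for every $\varepsilon>0$ there is $N\ge1$ such that $\|\sum_{k\in F}x_k\|<\varepsilon$ for every finite $F\subset\mathbb{N}$ with $F\cap\{1,\dots,N\}=\emptyset$. The domain of $A^n$ is $D(A^n)=\{x: x,Ax,\dots,A^{n-1}x\in D(A)\}$. The lower density of $E\subset\mathbb{N}$ is $\underline{\mathrm{dens}}(E)=\liminf_{N\to\infty}\#(E\cap\{1,\dots,N\})/N$. A (possibly unbounded) densely defined operator $T$ in $X$ is frequently hypercyclic if there is a vector $f\in D(T)$ such that $T^nf\in D(T)$ for every $n\ge1$ and, for every non-empty open $U\subset X$, the set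 $\{n\in\mathbb{N}: T^nf\in U\}$ has positive lower density. *)

theory Defs
  imports "HOL-Analysis.Analysis" "HOL-Library.Liminf_Limsup"
begin

text \<open>The F-space X is the whole (real) vector type 'a, with topology given by an
F-norm Nm; the metric is d(x,y) = Nm (x - y).\<close>

definition F_norm :: "('a::real_vector \<Rightarrow> real) \<Rightarrow> bool" where
  "F_norm Nm \<longleftrightarrow>
     (\<forall>x. Nm x = 0 \<longleftrightarrow> x = 0) \<and>
     (\<forall>x c. \<bar>c\<bar> \<le> 1 \<longrightarrow> Nm (c *\<^sub>R x) \<le> Nm x) \<and>
     (\<forall>x. ((\<lambda>c. Nm (c *\<^sub>R x)) \<longlongrightarrow> 0) (at (0::real))) \<and>
     (\<forall>x y. Nm (x + y) \<le> Nm x + Nm y)"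

definition F_space :: "('a::real_vector \<Rightarrow> real) \<Rightarrow> bool" where
  "F_space Nm \<longleftrightarrow> F_norm Nm \<and>
     (\<forall>s::nat \<Rightarrow> 'a. (\<forall>e>0. \<exists>M. \<forall>m n. M \<le> m \<longrightarrow> M \<le> n \<longrightarrow> Nm (s m - s n) < e)
        \<longrightarrow> (\<exists>x. (\<lambda>n. Nm (s n - x)) \<longlonglongrightarrow> 0))"

definition F_dense :: "('a::real_vector \<Rightarrow> real) \<Rightarrow> 'a set \<Rightarrow> bool" where
  "F_dense Nm S \<longleftrightarrow> (\<forall>x. \<forall>e>0. \<exists>s\<in>S. Nm (x - s) < e)"

definition F_open :: "('a::real_vector \<Rightarrow> real) \<Rightarrow> 'a set \<Rightarrow> bool" where
  "F_open Nm U \<longleftrightarrow> (\<forall>x\<in>U. \<exists>e>0. \<forall>y. Nm (y - x) < e \<longrightarrow> y \<in> U)"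

definition F_separable :: "('a::real_vector \<Rightarrow> real) \<Rightarrow> bool" where
  "F_separable Nm \<longleftrightarrow> (\<exists>S. countable S \<and> F_dense Nm S)"

definition F_tendsto :: "('a::real_vector \<Rightarrow> real) \<Rightarrow> (nat \<Rightarrow> 'a) \<Rightarrow> 'a \<Rightarrow> bool" where
  "F_tendsto Nm s x \<longleftrightarrow> (\<lambda>n. Nm (s n - x)) \<longlonglongrightarrow> 0"

text \<open>A (possibly unbounded) operator is a pair (domain D, map A) where only the values on D matter.\<close>

definition linear_op :: "'a::real_vector set \<Rightarrow> ('a \<Rightarrow> 'a) \<Rightarrow> bool" where
  "linear_op D A \<longleftrightarrow> 0 \<in> D \<and> (\<forall>x\<in>D. \<forall>y\<in>D. x + y \<in> D \<and> A (x + y) = A x + A y) \<and>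
     (\<forall>x\<in>D. \<forall>c. c *\<^sub>R x \<in> D \<and> A (c *\<^sub>R x) = c *\<^sub>R A x)"

definition closed_op :: "('a::real_vector \<Rightarrow> real) \<Rightarrow> 'a set \<Rightarrow> ('a \<Rightarrow> 'a) \<Rightarrow> bool" where
  "closed_op Nm D A \<longleftrightarrow> (\<forall>s x y. (\<forall>n. s n \<in> D) \<longrightarrow> F_tendsto Nm s x \<longrightarrow>
       F_tendsto Nm (\<lambda>n. A (s n)) y \<longrightarrow> x \<in> D \<and> A x = y)"

definition pow_dom :: "'a set \<Rightarrow> ('a \<Rightarrow> 'a) \<Rightarrow> nat \<Rightarrow> 'a set" where
  "pow_dom D A n = {x. \<forall>k<n. (A ^^ k) x \<in> D}"

definition inf_dom :: "'a set \<Rightarrow> ('a \<Rightarrow> 'a) \<Rightarrow> 'a set" where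
  "inf_dom D A = (\<Inter>n. pow_dom D A n)"

definition uncond_conv :: "('a::real_vector \<Rightarrow> real) \<Rightarrow> (nat \<Rightarrow> 'a) \<Rightarrow> bool" where
  "uncond_conv Nm x \<longleftrightarrow> (\<forall>e>0. \<exists>M\<ge>1. \<forall>F. finite F \<longrightarrow> F \<subseteq> {1..} \<longrightarrow>
       F \<inter> {1..M} = {} \<longrightarrow> Nm (\<Sum>k\<in>F. x k) < e)"

definition lower_density :: "nat set \<Rightarrow> ereal" where
  "lower_density E = liminf (\<lambda>N. ereal (real (card (E \<inter> {1..N})) / real N))"

definition freq_hypercyclic :: "('a::real_vector \<Rightarrow> real) \<Rightarrow> 'a set \<Rightarrow> ('a \<Rightarrow> 'a) \<Rightarrow> bool" where
  "freq_hypercyclic Nm D T \<longleftrightarrow> (\<exists>f\<in>D. (\<forall>n\<ge>1. (T ^^ n) f \<in> D) \<and>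
      (\<forall>U. F_open Nm U \<and> U \<noteq> {} \<longrightarrow> lower_density {n. (T ^^ n) f \<in> U} > 0))"

end

theory Submission
  imports Defs
begin

text \<open>Enumerate points y_k of X0 so that every point of X is approximated by y_k for arbitrarily
large k, and choose pairwise disjoint sets E_k of positive lower density whose elements are so far
apart from each other, relative to the tails of the series in (2) and (3), that
f = \<Sum>_k \<Sum>_{n \<in> E_k} B^n y_k converges. Since A^m B^n = B^(n-m) on X0 for m \<le> n, and
A^m B^n = A^(m-n) for m > n, for m \<in> E_k the vector A^m f is y_k plus two sums of tails of
the series (2) and (3), which are small by the separation. Closedness of the powers A^m puts f in
every D(A^m) and identifies A^m f with the limit of A^m applied to the partial sums. Hence the orbit of
f visits each neighbourhood of y_k along the set E_k of positive lower density.\<close>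

section \<open>F-norms\<close>

lemma F_norm_zero: "F_norm Nm \<Longrightarrow> Nm 0 = 0"
  unfolding F_norm_def by blast

lemma F_norm_triangle: "F_norm Nm \<Longrightarrow> Nm (x + y) \<le> Nm x + Nm y"
  unfolding F_norm_def by blast

lemma F_norm_minus:
  assumes "F_norm Nm"
  shows "Nm (- x) = Nm x"
proof -
  have "Nm ((-1::real) *\<^sub>R z) \<le> Nm z" for z
    using assms unfolding F_norm_def by (metis abs_neg_one order_refl)
  from this[of x] this[of "- x"] show ?thesis by simp
qed

lemma F_norm_commute: "F_norm Nm \<Longrightarrow> Nm (x - y) = Nm (y - x)"
  using F_norm_minus[of Nm "x - y"] by simp

lemma F_norm_triangle_diff: "F_norm Nm \<Longrightarrow> Nm (x - z) \<le> Nm (x - y) + Nm (y - z)"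
  using F_norm_triangle[of Nm "x - y" "y - z"] by simp

lemma F_norm_sum_le:
  assumes "F_norm Nm"
  shows "Nm (sum f F) \<le> (\<Sum>i\<in>F. Nm (f i))"
proof (induction F rule: infinite_finite_induct)
  case (insert x F)
  thus ?case using F_norm_triangle[OF assms, of "f x" "sum f F"] by simp
qed (simp_all add: F_norm_zero[OF assms])

lemma F_space_F_norm: "F_space Nm \<Longrightarrow> F_norm Nm"
  unfolding F_space_def by blast

lemma F_space_convergent:
  assumes "F_space Nm"
    and Cauchy: "\<And>e. e > 0 \<Longrightarrow> \<exists>K0. \<forall>K K'. K0 \<le> K \<longrightarrow> K \<le> K' \<longrightarrow> Nm (s K' - s K) < e"
  shows "\<exists>g. F_tendsto Nm s g"
proof -
  have "\<exists>M. \<forall>m n. M \<le> m \<longrightarrow> M \<le> n \<longrightarrow> Nm (s m - s n) < e" if e: "e > 0" for e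
  proof -
    obtain K0 where "\<forall>K K'. K0 \<le> K \<longrightarrow> K \<le> K' \<longrightarrow> Nm (s K' - s K) < e"
      using Cauchy[OF e] by blast
    moreover have "Nm (s m - s n) = Nm (s n - s m)" for m n
      using F_norm_commute[OF F_space_F_norm[OF assms(1)]] .
    ultimately show ?thesis by (metis nle_le)
  qed
  thus ?thesis using assms(1) unfolding F_space_def F_tendsto_def by blast
qed

lemma F_tendsto_limit_le:
  assumes "F_norm Nm" and "F_tendsto Nm s g"
    and bound: "\<And>K. K \<ge> K0 \<Longrightarrow> Nm (s K - c) \<le> b"
  shows "Nm (g - c) \<le> b"
proof (rule field_le_epsilon)
  fix e :: real assume "e > 0"
  with assms(2) obtain K1 where K1: "\<And>K. K \<ge> K1 \<Longrightarrow> \<bar>Nm (s K - g)\<bar> < e"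
    unfolding F_tendsto_def tendsto_iff eventually_sequentially by fastforce
  define K where "K = max K0 K1"
  have "Nm (g - c) \<le> Nm (s K - g) + Nm (s K - c)"
    using F_norm_triangle_diff[OF assms(1), where x=g and y="s K" and z=c]
      F_norm_commute[OF assms(1), of g "s K"]
    by simp
  also have "\<dots> \<le> e + b" using K1[of K] bound[of K] unfolding K_def by auto
  finally show "Nm (g - c) \<le> b + e" by simp
qed

lemma F_separable_dense_sequence:
  fixes Nm :: "'a::real_vector \<Rightarrow> real"
  assumes "F_norm Nm" and "F_separable Nm" and "F_dense Nm X0"
  obtains y :: "nat \<Rightarrow> 'a"
  where "\<And>k. y k \<in> X0" and "\<And>x e i. e > 0 \<Longrightarrow> \<exists>k\<ge>i. Nm (x - y k) < e"
proof -
  obtain S where S: "countable S" "F_dense Nm S"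
    using assms(2) unfolding F_separable_def by blast
  text \<open>y (prod_encode (a, i)) approximates the a-th point of S up to 1/(i+1).\<close>
  define y where "y k = (SOME z. z \<in> X0 \<and>
    Nm (from_nat_into S (fst (prod_decode k)) - z) < 1 / (real (snd (prod_decode k)) + 1))" for k
  have y: "y k \<in> X0 \<and>
      Nm (from_nat_into S (fst (prod_decode k)) - y k) < 1 / (real (snd (prod_decode k)) + 1)" for k
  proof -
    have "0 < 1 / (real (snd (prod_decode k)) + 1)" by simp
    with assms(3) have "\<exists>z. z \<in> X0 \<and>
        Nm (from_nat_into S (fst (prod_decode k)) - z) < 1 / (real (snd (prod_decode k)) + 1)"
      unfolding F_dense_def by blast
    then show ?thesis unfolding y_def by (rule someI_ex)
  qed
  have approx: "\<exists>k\<ge>i. Nm (x - y k) < e" if "e > 0" for x e i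
  proof -
    obtain s where s: "s \<in> S" "Nm (x - s) < e/2"
      using S(2) \<open>e > 0\<close> unfolding F_dense_def by (meson half_gt_zero)
    obtain a where a: "from_nat_into S a = s" using from_nat_into_surj[OF S(1) s(1)] by blast
    have "0 < e/2" using \<open>e > 0\<close> by simp
    then obtain j where j: "inverse (real (Suc j)) < e/2" using reals_Archimedean by blast
    define k where "k = prod_encode (a, max i j)"
    have "Nm (s - y k) < 1 / (real (max i j) + 1)"
      using y[of k] a unfolding k_def by simp
    also have "\<dots> \<le> inverse (real (Suc j))" by (simp add: inverse_eq_divide frac_le)
    finally have "Nm (s - y k) < e/2" using j by simp
    moreover have "i \<le> k" unfolding k_def by (meson le_prod_encode_2 max.boundedE)
    ultimately show ?thesis
      using s(2) F_norm_triangle_diff[OF assms(1), where x=x and y=s and z="y k"]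
      by (intro exI[of _ k]) auto
  qed
  show ?thesis
  proof (rule that[of y])
    show "y k \<in> X0" for k using y by blast
  qed (rule approx)
qed

lemma uncond_conv_uniform_tails:
  assumes "\<And>j. uncond_conv Nm (u j)"
  obtains N :: "nat \<Rightarrow> nat" where "mono N" and "\<And>k. k < N k"
    and "\<And>j k G. j \<le> k \<Longrightarrow> finite G \<Longrightarrow> G \<subseteq> {N k..} \<Longrightarrow> Nm (\<Sum>n\<in>G. u j n) < (1/2)^(k + j)"
proof -
  have "\<exists>M. \<forall>F. finite F \<longrightarrow> F \<subseteq> {1..} \<longrightarrow> F \<inter> {1..M} = {} \<longrightarrow>
      Nm (\<Sum>n\<in>F. u j n) < (1/2)^(k + j)" for j k
  proof -
    have "(1/2::real)^(k + j) > 0" by simp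
    with assms[of j] show ?thesis unfolding uncond_conv_def by blast
  qed
  then obtain M where M: "\<forall>F. finite F \<longrightarrow> F \<subseteq> {1..} \<longrightarrow> F \<inter> {1..M j k} = {} \<longrightarrow>
      Nm (\<Sum>n\<in>F. u j n) < (1/2)^(k + j)" for j k
    by metis
  define N where "N k = (\<Sum>i\<le>k. 1 + (\<Sum>j\<le>i. M j i))" for k
  have "mono N" unfolding N_def mono_def by (intro allI impI sum_mono2) auto
  have N_gt: "k < N k" for k
  proof -
    have "(\<Sum>i\<le>k. (1::nat)) \<le> N k" unfolding N_def by (intro sum_mono) auto
    thus ?thesis by simp
  qed
  have M_less: "M j k < N k" if "j \<le> k" for j k
  proof -
    have "M j k \<le> (\<Sum>j\<le>k. M j k)" using that by (intro member_le_sum) auto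
    also have "\<dots> < 1 + (\<Sum>j\<le>k. M j k)" by simp
    also have "\<dots> \<le> N k" unfolding N_def
      by (rule member_le_sum[where f = "\<lambda>i. 1 + (\<Sum>j\<le>i. M j i)"]) auto
    finally show ?thesis .
  qed
  show ?thesis
  proof (rule that)
    show "mono N" by fact
    show "\<And>k. k < N k" by (rule N_gt)
    fix j k G assume "j \<le> k" "finite G" "G \<subseteq> {N k..}"
    with N_gt[of k] M_less[of j k] have "G \<subseteq> {1..}" "G \<inter> {1..M j k} = {}" by fastforce+
    with M[of j k] \<open>finite G\<close> show "Nm (\<Sum>n\<in>G. u j n) < (1/2)^(k + j)" by blast
  qed
qed

section \<open>Unbounded operators with a right inverse\<close>

lemma linear_op_zero:
  assumes "linear_op D A"
  shows "0 \<in> D" and "A 0 = 0"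
proof -
  show "0 \<in> D" using assms unfolding linear_op_def by blast
  with assms have "A ((0::real) *\<^sub>R 0) = (0::real) *\<^sub>R A 0" unfolding linear_op_def by blast
  thus "A 0 = 0" by simp
qed

lemma inf_dom_iff: "x \<in> inf_dom D A \<longleftrightarrow> (\<forall>k. (A ^^ k) x \<in> D)"
  unfolding inf_dom_def pow_dom_def by auto

lemma inf_dom_subset_pow_dom: "inf_dom D A \<subseteq> pow_dom D A r"
  unfolding inf_dom_def by auto

lemma funpow_zero_inf_dom:
  assumes "linear_op D A"
  shows "(A ^^ i) 0 = 0" and "0 \<in> inf_dom D A"
proof -
  show zero: "(A ^^ i) 0 = 0" for i by (induction i) (auto simp: linear_op_zero[OF assms])
  show "0 \<in> inf_dom D A" using zero linear_op_zero[OF assms] by (simp add: inf_dom_iff)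
qed

lemma funpow_add_inf_dom:
  assumes L: "linear_op D A" and "x \<in> inf_dom D A" and "y \<in> inf_dom D A"
  shows "(A ^^ i) (x + y) = (A ^^ i) x + (A ^^ i) y" and "x + y \<in> inf_dom D A"
proof -
  show add: "(A ^^ i) (x + y) = (A ^^ i) x + (A ^^ i) y" for i
  proof (induction i)
    case (Suc i)
    have "(A ^^ i) x \<in> D" "(A ^^ i) y \<in> D" using assms(2,3) by (auto simp: inf_dom_iff)
    thus ?case using Suc L unfolding linear_op_def by simp
  qed simp
  show "x + y \<in> inf_dom D A"
    using add assms(2,3) L unfolding linear_op_def by (simp add: inf_dom_iff)
qed

lemma funpow_sum_inf_dom:
  assumes L: "linear_op D A" and "\<And>n. n \<in> F \<Longrightarrow> v n \<in> inf_dom D A"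
  shows "(A ^^ i) (sum v F) = (\<Sum>n\<in>F. (A ^^ i) (v n))" and "sum v F \<in> inf_dom D A"
proof -
  have "(A ^^ i) (sum v F) = (\<Sum>n\<in>F. (A ^^ i) (v n)) \<and> sum v F \<in> inf_dom D A"
    using assms(2)
  proof (induction F rule: infinite_finite_induct)
    case (insert x F)
    thus ?case using funpow_add_inf_dom[OF L, of "v x" "sum v F"] by simp
  qed (simp_all add: funpow_zero_inf_dom[OF L])
  thus "(A ^^ i) (sum v F) = (\<Sum>n\<in>F. (A ^^ i) (v n))" "sum v F \<in> inf_dom D A" by auto
qed

lemma funpow_right_inverse:
  assumes BX: "\<And>x. x \<in> X0 \<Longrightarrow> B x \<in> X0" and AB: "\<And>x. x \<in> X0 \<Longrightarrow> A (B x) = x"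
    and "y \<in> X0"
  shows "(A ^^ m) ((B ^^ n) y) = (if m \<le> n then (B ^^ (n - m)) y else (A ^^ (m - n)) y)"
proof -
  have BX': "(B ^^ k) y \<in> X0" for k by (induction k) (auto simp: \<open>y \<in> X0\<close> BX)
  have up: "(A ^^ m) ((B ^^ (m + k)) y) = (B ^^ k) y" for m k
  proof (induction m)
    case (Suc m)
    have "(A ^^ Suc m) z = (A ^^ m) (A z)" for z by (simp only: funpow_Suc_right comp_def)
    then have "(A ^^ Suc m) ((B ^^ (Suc m + k)) y) = (A ^^ m) (A (B ((B ^^ (m + k)) y)))"
      by simp
    also have "\<dots> = (A ^^ m) ((B ^^ (m + k)) y)" using AB[OF BX'[of "m + k"]] by simp
    finally show ?case using Suc by simp
  qed simp
  show ?thesis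
  proof (cases "m \<le> n")
    case True
    thus ?thesis using up[of m "n - m"] by simp
  next
    case False
    have "(A ^^ m) ((B ^^ n) y) = (A ^^ (m - n)) ((A ^^ n) ((B ^^ (n + 0)) y))"
      using False funpow_add[of "m - n" n A] by simp
    thus ?thesis using up[of n 0] False by simp
  qed
qed

lemma lower_density_mono:
  assumes "E \<subseteq> F"
  shows "lower_density E \<le> lower_density F"
  unfolding lower_density_def
proof (intro Liminf_mono always_eventually allI)
  fix M :: nat
  have "card (E \<inter> {1..M}) \<le> card (F \<inter> {1..M})" using assms by (intro card_mono) auto
  then show "ereal (real (card (E \<inter> {1..M})) / real M) \<le> ereal (real (card (F \<inter> {1..M})) / real M)"
    by (simp add: divide_right_mono)
qed

lemma lower_density_pos:
  assumes "c > 0" and "\<And>M. M \<ge> M0 \<Longrightarrow> c \<le> real (card (E \<inter> {1..M})) / real M"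
  shows "lower_density E > 0"
proof -
  have "ereal c \<le> lower_density E"
    unfolding lower_density_def
    using assms(2) by (intro Liminf_bounded eventually_sequentiallyI[of M0]) auto
  thus ?thesis using assms(1) by (meson ereal_less(2) less_le_trans zero_ereal_def)
qed

section \<open>Separated sets of positive lower density\<close>

lemma sum_power_half_le: "finite S \<Longrightarrow> (\<Sum>j\<in>S. (1/2::real)^j) \<le> 2"
proof -
  assume "finite S"
  then have "(\<Sum>j\<in>S. (1/2::real)^j) \<le> (\<Sum>j. (1/2::real)^j)"
    by (intro sum_le_suminf summable_geometric) auto
  also have "\<dots> = 2" using suminf_geometric[of "1/2::real"] by simp
  finally show ?thesis .
qed

text \<open>Write P_j for sep_period N j. Each P_j is a multiple of the earlier periods and so much
larger than them that the multiples of P_k lying in near_multiples N j form a fraction of at most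
2^-(j+2) of all multiples of P_k; removing them for all j > k keeps a positive density.\<close>

primrec sep_period :: "(nat \<Rightarrow> nat) \<Rightarrow> nat \<Rightarrow> nat" where
  "sep_period N 0 = 2^5 * (N 0 + 1)"
| "sep_period N (Suc j) = sep_period N j * 2^(Suc j + 5) * (N (Suc j) + 1)"

definition near_multiples :: "(nat \<Rightarrow> nat) \<Rightarrow> nat \<Rightarrow> nat set" where
  "near_multiples N j =
     {n. \<exists>q\<ge>1. n < q * sep_period N j + 2 * N j \<and> q * sep_period N j < n + 2 * N j}"

definition separated_set :: "(nat \<Rightarrow> nat) \<Rightarrow> nat \<Rightarrow> nat set" where
  "separated_set N k =
     {n. 0 < n \<and> sep_period N k dvd n \<and> (\<forall>j>k. n \<notin> near_multiples N j)}"

lemma sep_period_pos: "0 < sep_period N j"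
  by (induction j) auto

lemma sep_period_ge: "2^(j+5) * (N j + 1) \<le> sep_period N j"
proof (cases j)
  case (Suc i)
  have "2^(j+5) * (N j + 1) \<le> sep_period N i * (2^(j+5) * (N j + 1))"
    using sep_period_pos[of N i] by simp
  thus ?thesis using Suc by (simp add: ac_simps)
qed simp

lemma four_mult_le_sep_period: "4 * N j \<le> sep_period N j"
proof -
  have "(4::nat) \<le> 2^(j+5)" using power_increasing[of 2 "j+5" "2::nat"] by simp
  then have "4 * N j \<le> 2^(j+5) * (N j + 1)" by (intro mult_mono) auto
  then show ?thesis using sep_period_ge[of j N] by linarith
qed

lemma less_sep_period: "j < sep_period N j"
proof -
  have "j < 2^j" by (rule less_exp)
  also have "\<dots> \<le> 2^(j+5)" by (rule power_increasing) auto
  also have "\<dots> \<le> 2^(j+5) * (N j + 1)" by simp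
  finally show ?thesis using sep_period_ge[of j N] by linarith
qed

lemma sep_period_dvd: "k \<le> j \<Longrightarrow> sep_period N k dvd sep_period N j"
  by (induction j) (auto simp: le_Suc_eq intro: dvd_mult2)

lemma sep_period_mono: "k \<le> j \<Longrightarrow> sep_period N k \<le> sep_period N j"
  using sep_period_dvd sep_period_pos by (simp add: dvd_imp_le)

lemma sep_period_gap:
  assumes "k < j"
  shows "8 * N j * sep_period N k * 2^(j+2) \<le> sep_period N j"
proof -
  obtain i where j: "j = Suc i" using assms by (cases j) auto
  have "8 * N j * sep_period N k * 2^(j+2) = sep_period N k * 2^(j+5) * N j"
    by (simp add: power_add)
  also have "\<dots> \<le> sep_period N i * 2^(j+5) * (N j + 1)"
    using sep_period_mono[of k i N] assms j by (intro mult_mono) auto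
  also have "\<dots> = sep_period N j" using j by simp
  finally show ?thesis .
qed

lemma separated_set_multiple:
  assumes "n \<in> separated_set N k"
  obtains q where "q \<ge> 1" and "n = q * sep_period N k"
proof -
  from assms obtain q where "n = sep_period N k * q" "0 < n" unfolding separated_set_def by auto
  thus ?thesis using that[of q] by (cases q) auto
qed

lemma separated_set_far_from_multiples:
  assumes "n \<in> separated_set N k" and "k < j" and "q \<ge> 1"
  shows "n + 2 * N j \<le> q * sep_period N j \<or> q * sep_period N j + 2 * N j \<le> n"
  using assms unfolding separated_set_def near_multiples_def by force

lemma separated_set_ge:
  assumes "n \<in> separated_set N k"
  shows "2 * N k \<le> n"
proof -
  obtain q where "q \<ge> 1" "n = q * sep_period N k" using assms by (rule separated_set_multiple)
  then have "sep_period N k \<le> n" by simp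
  with four_mult_le_sep_period[of N k] show ?thesis by linarith
qed

lemma separated_set_disjoint:
  assumes "\<And>j. 0 < N j" and "k \<noteq> j"
  shows "separated_set N k \<inter> separated_set N j = {}"
proof -
  have "n \<notin> separated_set N j" if "n \<in> separated_set N k" "k < j" for n k j
  proof
    assume "n \<in> separated_set N j"
    then obtain q where q: "q \<ge> 1" "n = q * sep_period N j" by (rule separated_set_multiple)
    with separated_set_far_from_multiples[OF that q(1)] assms(1)[of j] show False by auto
  qed
  with assms(2) show ?thesis by (metis disjoint_iff nat_neq_iff)
qed

lemma separated_set_far_apart:
  assumes "mono N" and n: "n \<in> separated_set N k" and m: "m \<in> separated_set N j" and "n \<noteq> m"
  shows "n + N k + N j \<le> m \<or> m + N k + N j \<le> n"
proof -
  have below: "n + N k + N j \<le> m \<or> m + N k + N j \<le> n"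
    if n: "n \<in> separated_set N k" and m: "m \<in> separated_set N j" and "k < j" for n m k j
  proof -
    obtain q where "q \<ge> 1" "m = q * sep_period N j" using m by (rule separated_set_multiple)
    with separated_set_far_from_multiples[OF n \<open>k < j\<close>]
    have "n + 2 * N j \<le> m \<or> m + 2 * N j \<le> n" by simp
    moreover have "N k \<le> N j" using \<open>mono N\<close> \<open>k < j\<close> by (simp add: monoD)
    ultimately show ?thesis by auto
  qed
  consider "k < j" | "j < k" | "k = j" by linarith
  then show ?thesis
  proof cases
    case 1
    with below n m show ?thesis by blast
  next
    case 2
    with below n m show ?thesis by fastforce
  next
    case 3
    obtain a where a: "n = a * sep_period N k" using n by (rule separated_set_multiple)
    obtain b where b: "m = b * sep_period N k" using m 3 by (auto elim: separated_set_multiple)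
    have "a + 1 \<le> b \<or> b + 1 \<le> a" using a b \<open>n \<noteq> m\<close> by auto
    then have "n + sep_period N k \<le> m \<or> m + sep_period N k \<le> n"
      unfolding a b by (metis add_mult_distrib mult_1 mult_le_mono1)
    with four_mult_le_sep_period[of N k] 3 show ?thesis by auto
  qed
qed

lemma card_near_multiples_le:
  assumes "k < j"
  shows "real (card (near_multiples N j \<inter> {1..M})) \<le> real M / (real (sep_period N k) * 2^(j+2))"
proof -
  let ?P = "sep_period N"
  define Q where "Q = {q. 1 \<le> q \<and> q * ?P j < 2 * M}"
  have Q: "Q \<subseteq> {1..(2*M) div ?P j}"
    unfolding Q_def using sep_period_pos[of N j] by (auto simp: less_eq_div_iff_mult_less_eq)
  have "card Q * ?P j \<le> (2*M) div ?P j * ?P j" using card_mono[OF _ Q] by simp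
  also have "\<dots> \<le> 2 * M" by simp
  finally have card_Q: "card Q * ?P j \<le> 2 * M" .
  have "near_multiples N j \<inter> {1..M} \<subseteq> (\<Union>q\<in>Q. {q * ?P j - 2 * N j<..<q * ?P j + 2 * N j})"
  proof
    fix n assume n: "n \<in> near_multiples N j \<inter> {1..M}"
    then obtain q where q: "q \<ge> 1" "n < q * ?P j + 2 * N j" "q * ?P j < n + 2 * N j"
      unfolding near_multiples_def by auto
    have "?P j \<le> q * ?P j" using q(1) by simp
    moreover have "n \<le> M" using n by simp
    ultimately have "q * ?P j < 2 * M" using q(3) four_mult_le_sep_period[of N j] by linarith
    with q(1) have "q \<in> Q" unfolding Q_def by simp
    moreover have "q * ?P j - 2 * N j < n" using n q(3) by auto
    ultimately show "n \<in> (\<Union>q\<in>Q. {q * ?P j - 2 * N j<..<q * ?P j + 2 * N j})" using q(2) by auto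
  qed
  then have "card (near_multiples N j \<inter> {1..M})
      \<le> card (\<Union>q\<in>Q. {q * ?P j - 2 * N j<..<q * ?P j + 2 * N j})"
    by (intro card_mono) (auto intro: finite_subset[OF Q])
  also have "\<dots> \<le> (\<Sum>q\<in>Q. card {q * ?P j - 2 * N j<..<q * ?P j + 2 * N j})"
    by (intro card_UN_le finite_subset[OF Q]) auto
  also have "\<dots> \<le> (\<Sum>q\<in>Q. 4 * N j)" by (intro sum_mono) auto
  finally have "card (near_multiples N j \<inter> {1..M}) \<le> card Q * (4 * N j)" by simp
  then have "card (near_multiples N j \<inter> {1..M}) * (?P k * 2^(j+2)) * 2
      \<le> card Q * (8 * N j * ?P k * 2^(j+2))"
    using mult_le_mono1[of _ _ "?P k * 2^(j+2) * 2"] by (simp add: ac_simps)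
  also have "\<dots> \<le> card Q * ?P j" using sep_period_gap[OF assms] by simp
  also have "\<dots> \<le> 2 * M" by (rule card_Q)
  finally have "card (near_multiples N j \<inter> {1..M}) * (?P k * 2^(j+2)) \<le> M" by linarith
  then have "real (card (near_multiples N j \<inter> {1..M}) * (?P k * 2^(j+2))) \<le> real M"
    by (simp only: of_nat_le_iff)
  then have "real (card (near_multiples N j \<inter> {1..M})) * (real (?P k) * 2^(j+2)) \<le> real M"
    by (simp only: of_nat_mult of_nat_power of_nat_numeral)
  moreover have "0 < real (?P k) * 2^(j+2)" using sep_period_pos[of N k] by simp
  ultimately show ?thesis by (simp add: pos_le_divide_eq)
qed

lemma multiples_subset_separated_set:
  "(\<lambda>i. i * sep_period N k) ` {1..M div sep_period N k}
     - (\<Union>j\<in>{k<..2*M}. near_multiples N j \<inter> {1..M}) \<subseteq> separated_set N k \<inter> {1..M}"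
proof
  let ?P = "sep_period N"
  fix n assume "n \<in> (\<lambda>i. i * ?P k) ` {1..M div ?P k} - (\<Union>j\<in>{k<..2*M}. near_multiples N j \<inter> {1..M})"
  then obtain i where i: "i \<in> {1..M div ?P k}" "n = i * ?P k"
    and near: "n \<notin> (\<Union>j\<in>{k<..2*M}. near_multiples N j \<inter> {1..M})" by auto
  have "n \<le> M div ?P k * ?P k" using i by simp
  also have "\<dots> \<le> M" by simp
  finally have "n \<in> {1..M}" using i sep_period_pos[of N k] by simp
  moreover have "n \<notin> near_multiples N j" if "k < j" for j
  proof (cases "j \<le> 2 * M")
    case True with near \<open>n \<in> {1..M}\<close> that show ?thesis by auto
  next
    case False
    text \<open>Then P_j > 2 M, so every positive multiple of P_j is too far beyond n \<le> M.\<close>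
    show ?thesis
    proof
      assume "n \<in> near_multiples N j"
      then obtain q where q: "q \<ge> 1" "q * ?P j < n + 2 * N j" unfolding near_multiples_def by auto
      have "?P j \<le> q * ?P j" using q(1) by simp
      with q(2) False \<open>n \<in> {1..M}\<close> less_sep_period[of j N] four_mult_le_sep_period[of N j]
      show False by auto
    qed
  qed
  ultimately show "n \<in> separated_set N k \<inter> {1..M}" using i unfolding separated_set_def by auto
qed

lemma card_separated_set_ge:
  "real M / (2 * real (sep_period N k)) - 1 \<le> real (card (separated_set N k \<inter> {1..M}))"
proof -
  let ?P = "sep_period N"
  define Mk where "Mk = (\<lambda>i. i * ?P k) ` {1..M div ?P k}"
  define Near where "Near = (\<Union>j\<in>{k<..2*M}. near_multiples N j \<inter> {1..M})"
  have "real M / real (?P k) - 1 \<le> real (M div ?P k)"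
  proof -
    have "real M < (real (M div ?P k) + 1) * real (?P k)"
      using sep_period_pos[of N k] by (metis div_less_iff_less_mult mult.commute
          of_nat_1 of_nat_add of_nat_less_iff of_nat_mult less_add_one)
    thus ?thesis using sep_period_pos[of N k] by (simp add: field_simps)
  qed
  also have "\<dots> = real (card Mk)"
    unfolding Mk_def using sep_period_pos[of N k] by (subst card_image) (auto simp: inj_on_def)
  finally have card_Mk: "real M / real (?P k) - 1 \<le> real (card Mk)" .
  have "card Near \<le> (\<Sum>j\<in>{k<..2*M}. card (near_multiples N j \<inter> {1..M}))"
    unfolding Near_def by (rule card_UN_le) simp
  then have "real (card Near) \<le> (\<Sum>j\<in>{k<..2*M}. real (card (near_multiples N j \<inter> {1..M})))"
    by (metis of_nat_le_iff of_nat_sum)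
  also have "\<dots> \<le> (\<Sum>j\<in>{k<..2*M}. real M / (real (?P k) * 2^(j+2)))"
    by (intro sum_mono card_near_multiples_le) auto
  also have "\<dots> = real M / (4 * real (?P k)) * (\<Sum>j\<in>{k<..2*M}. (1/2)^j)"
    by (simp add: sum_distrib_left power_add field_simps)
  also have "\<dots> \<le> real M / (4 * real (?P k)) * 2"
    by (intro mult_left_mono sum_power_half_le) auto
  finally have card_Near: "real (card Near) \<le> real M / (2 * real (?P k))" by simp
  have "real (card Mk) - real (card Near) \<le> real (card (Mk - Near))"
    using diff_card_le_card_Diff[of Near Mk] unfolding Near_def by auto
  also have "\<dots> \<le> real (card (separated_set N k \<inter> {1..M}))"
    using card_mono[OF _ multiples_subset_separated_set] unfolding Mk_def Near_def by simp
  moreover have "real M / real (?P k) = 2 * (real M / (2 * real (?P k)))" by simp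
  ultimately show ?thesis using card_Mk card_Near by linarith
qed

lemma lower_density_separated_set: "0 < lower_density (separated_set N k)"
proof (rule lower_density_pos)
  let ?P = "real (sep_period N k)"
  have P: "0 < ?P" using sep_period_pos[of N k] by simp
  then show "0 < 1 / (4 * ?P)" by simp
  fix M assume M: "4 * sep_period N k \<le> M"
  then have "1 \<le> real M / (4 * ?P)" using P by (simp add: le_divide_eq)
  moreover have "real M / (2 * ?P) = 2 * (real M / (4 * ?P))" by simp
  ultimately have "real M / (4 * ?P) \<le> real M / (2 * ?P) - 1" by linarith
  also have "\<dots> \<le> real (card (separated_set N k \<inter> {1..M}))" by (rule card_separated_set_ge)
  finally have "1 / (4 * ?P) * real M \<le> real (card (separated_set N k \<inter> {1..M}))" by simp
  moreover have "0 < real M" using M sep_period_pos[of N k] by simp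
  ultimately show "1 / (4 * ?P) \<le> real (card (separated_set N k \<inter> {1..M})) / real M"
    by (simp add: pos_le_divide_eq)
qed

section \<open>The frequently hypercyclic vector\<close>

lemma sum_labelled_tails_le:
  fixes w :: "nat \<Rightarrow> nat \<Rightarrow> 'a::real_vector" and Nm :: "'a \<Rightarrow> real"
  assumes Fn: "F_norm Nm"
    and tails: "\<And>j k G. j \<le> k \<Longrightarrow> finite G \<Longrightarrow> G \<subseteq> {N k..} \<Longrightarrow>
                  Nm (\<Sum>n\<in>G. w j n) < (1/2)^(k + j)"
    and "finite F" and "inj_on d F"
    and far: "\<And>n. n \<in> F \<Longrightarrow> N (max (lab n) k) \<le> d n"
  shows "Nm (\<Sum>n\<in>F. w (lab n) (d n)) \<le> 2 * (1/2)^k"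
proof -
  let ?F = "\<lambda>l. {n \<in> F. lab n = l}"
  have "(\<Sum>n\<in>F. w (lab n) (d n)) = (\<Sum>l\<in>lab ` F. \<Sum>n\<in>?F l. w (lab n) (d n))"
    by (rule sum.image_gen[OF \<open>finite F\<close>])
  also have "\<dots> = (\<Sum>l\<in>lab ` F. \<Sum>i\<in>d ` ?F l. w l i)"
  proof (rule sum.cong[OF refl])
    fix l
    have "inj_on d (?F l)" using \<open>inj_on d F\<close> by (rule inj_on_subset) auto
    then have "(\<Sum>i\<in>d ` ?F l. w l i) = (\<Sum>n\<in>?F l. w l (d n))" by (simp add: sum.reindex)
    also have "\<dots> = (\<Sum>n\<in>?F l. w (lab n) (d n))" by (rule sum.cong) auto
    finally show "(\<Sum>n\<in>?F l. w (lab n) (d n)) = (\<Sum>i\<in>d ` ?F l. w l i)" by simp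
  qed
  finally have "Nm (\<Sum>n\<in>F. w (lab n) (d n)) \<le> (\<Sum>l\<in>lab ` F. Nm (\<Sum>i\<in>d ` ?F l. w l i))"
    using F_norm_sum_le[OF Fn] by simp
  also have "\<dots> \<le> (\<Sum>l\<in>lab ` F. (1/2)^k * (1/2)^l)"
  proof (rule sum_mono)
    fix l
    have "d ` ?F l \<subseteq> {N (max l k)..}" using far by auto
    then have "Nm (\<Sum>i\<in>d ` ?F l. w l i) < (1/2)^(max l k + l)"
      using \<open>finite F\<close> by (intro tails) auto
    also have "\<dots> \<le> (1/2)^(k + l)" by (rule power_decreasing) auto
    finally show "Nm (\<Sum>i\<in>d ` ?F l. w l i) \<le> (1/2)^k * (1/2)^l" by (simp add: power_add)
  qed
  also have "\<dots> = (1/2)^k * (\<Sum>l\<in>lab ` F. (1/2)^l)" by (simp add: sum_distrib_left)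
  also have "\<dots> \<le> (1/2)^k * 2"
    using \<open>finite F\<close> by (intro mult_left_mono sum_power_half_le) auto
  finally show ?thesis by simp
qed

locale separated_orbit =
  fixes Nm :: "'a::real_vector \<Rightarrow> real" and D :: "'a set" and A B :: "'a \<Rightarrow> 'a"
    and X0 :: "'a set" and y :: "nat \<Rightarrow> 'a" and N :: "nat \<Rightarrow> nat" and E :: "nat \<Rightarrow> nat set"
  assumes F_space: "F_space Nm"
    and linear: "linear_op D A"
    and X0_inf_dom: "X0 \<subseteq> inf_dom D A"
    and B_X0: "\<And>x. x \<in> X0 \<Longrightarrow> B x \<in> X0"
    and A_B: "\<And>x. x \<in> X0 \<Longrightarrow> A (B x) = x"
    and y_X0: "\<And>j. y j \<in> X0"
    and tails_A: "\<And>j k G. j \<le> k \<Longrightarrow> finite G \<Longrightarrow> G \<subseteq> {N k..} \<Longrightarrow>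
                    Nm (\<Sum>n\<in>G. (A ^^ n) (y j)) < (1/2)^(k + j)"
    and tails_B: "\<And>j k G. j \<le> k \<Longrightarrow> finite G \<Longrightarrow> G \<subseteq> {N k..} \<Longrightarrow>
                    Nm (\<Sum>n\<in>G. (B ^^ n) (y j)) < (1/2)^(k + j)"
    and N_gt: "\<And>k. k < N k"
    and E_disjoint: "\<And>k j. k \<noteq> j \<Longrightarrow> E k \<inter> E j = {}"
    and E_far_apart: "\<And>k j n m. n \<in> E k \<Longrightarrow> m \<in> E j \<Longrightarrow> n \<noteq> m \<Longrightarrow>
                        n + N k + N j \<le> m \<or> m + N k + N j \<le> n"
    and E_ge: "\<And>k n. n \<in> E k \<Longrightarrow> 2 * N k \<le> n"
begin

lemma F_norm: "F_norm Nm"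
  using F_space by (rule F_space_F_norm)

definition label :: "nat \<Rightarrow> nat" where
  "label n = (SOME l. n \<in> E l)"

definition summand :: "nat \<Rightarrow> 'a" where
  "summand n = (if n \<in> (\<Union>l. E l) then (B ^^ n) (y (label n)) else 0)"

lemma label_eq: "n \<in> E l \<Longrightarrow> label n = l"
  unfolding label_def by (metis E_disjoint disjoint_iff someI)

lemma summand_inf_dom: "summand n \<in> inf_dom D A"
proof -
  have "(B ^^ n) z \<in> X0" if "z \<in> X0" for z using that by (induction n) (auto simp: B_X0)
  then show ?thesis
    unfolding summand_def using y_X0 X0_inf_dom funpow_zero_inf_dom(2)[OF linear] by auto
qed

lemma pow_summand:
  "(A ^^ m) (summand n) = (if n \<in> (\<Union>l. E l) then
     (if m \<le> n then (B ^^ (n - m)) (y (label n)) else (A ^^ (m - n)) (y (label n))) else 0)"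
  unfolding summand_def
  using funpow_right_inverse[OF B_X0 A_B y_X0] funpow_zero_inf_dom(1)[OF linear] by simp

lemma sum_pow_summand_above:
  assumes "\<And>n. n \<in> F \<Longrightarrow> m \<le> n" and "finite F"
  shows "(\<Sum>n\<in>F. (A ^^ m) (summand n)) = (\<Sum>n\<in>F \<inter> (\<Union>l. E l). (B ^^ (n - m)) (y (label n)))"
proof -
  have "(\<Sum>n\<in>F. (A ^^ m) (summand n)) =
      (\<Sum>n\<in>F. if n \<in> (\<Union>l. E l) then (B ^^ (n - m)) (y (label n)) else 0)"
    using assms(1) by (intro sum.cong) (auto simp: pow_summand)
  then show ?thesis using assms(2) by (simp add: sum.inter_restrict)
qed

lemma sum_pow_summand_below:
  assumes "\<And>n. n \<in> F \<Longrightarrow> n < m" and "finite F"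
  shows "(\<Sum>n\<in>F. (A ^^ m) (summand n)) = (\<Sum>n\<in>F \<inter> (\<Union>l. E l). (A ^^ (m - n)) (y (label n)))"
proof -
  have "(\<Sum>n\<in>F. (A ^^ m) (summand n)) =
      (\<Sum>n\<in>F. if n \<in> (\<Union>l. E l) then (A ^^ (m - n)) (y (label n)) else 0)"
    using assms(1) by (intro sum.cong) (auto simp: pow_summand dest!: assms(1))
  then show ?thesis using assms(2) by (simp add: sum.inter_restrict)
qed

lemma pow_partial_sums_convergent: "\<exists>g. F_tendsto Nm (\<lambda>K. \<Sum>n<K. (A ^^ m) (summand n)) g"
proof (rule F_space_convergent[OF F_space])
  fix e :: real assume "e > 0"
  obtain L0 where "(1/2::real)^L0 < e/2"
    using real_arch_pow_inv[of "e/2" "1/2::real"] \<open>e > 0\<close> by auto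
  define L where "L = max L0 m"
  have "(1/2::real)^L \<le> (1/2)^L0" unfolding L_def by (rule power_decreasing) auto
  with \<open>(1/2::real)^L0 < e/2\<close> have L: "(1/2::real)^L < e/2" "m \<le> L"
    unfolding L_def by linarith simp
  show "\<exists>K0. \<forall>K K'. K0 \<le> K \<longrightarrow> K \<le> K' \<longrightarrow>
      Nm ((\<Sum>n<K'. (A ^^ m) (summand n)) - (\<Sum>n<K. (A ^^ m) (summand n))) < e"
  proof (intro exI[of _ "N L + m"] allI impI)
    fix K K' assume K: "N L + m \<le> K" "K \<le> K'"
    have "(\<Sum>n<K'. (A ^^ m) (summand n)) - (\<Sum>n<K. (A ^^ m) (summand n)) =
        (\<Sum>n\<in>{K..<K'}. (A ^^ m) (summand n))"
      using sum_diff_nat_ivl[of 0 K K' "\<lambda>n. (A ^^ m) (summand n)"] K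
      by (simp add: lessThan_atLeast0)
    also have "\<dots> = (\<Sum>n\<in>{K..<K'} \<inter> (\<Union>l. E l). (B ^^ (n - m)) (y (label n)))"
      using K by (intro sum_pow_summand_above) auto
    finally have "Nm ((\<Sum>n<K'. (A ^^ m) (summand n)) - (\<Sum>n<K. (A ^^ m) (summand n))) =
        Nm (\<Sum>n\<in>{K..<K'} \<inter> (\<Union>l. E l). (B ^^ (n - m)) (y (label n)))" by simp
    also have "\<dots> \<le> 2 * (1/2)^L"
    proof (rule sum_labelled_tails_le[OF F_norm tails_B])
      show "inj_on (\<lambda>n. n - m) ({K..<K'} \<inter> (\<Union>l. E l))" using K by (auto simp: inj_on_def)
      fix n assume n: "n \<in> {K..<K'} \<inter> (\<Union>l. E l)"
      then obtain l where l: "n \<in> E l" by auto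
      show "N (max (label n) L) \<le> n - m"
      proof (cases "l \<le> L")
        case True
        moreover have "K \<le> n" using n by simp
        ultimately show ?thesis using K label_eq[OF l] by (simp add: max_def)
      next
        case False
        then show ?thesis using E_ge[OF l] N_gt[of l] L(2) label_eq[OF l] by (simp add: max_def)
      qed
    qed auto
    also have "\<dots> < e" using L(1) by simp
    finally show "Nm ((\<Sum>n<K'. (A ^^ m) (summand n)) - (\<Sum>n<K. (A ^^ m) (summand n))) < e" .
  qed
qed

lemma pow_partial_sums_limit_near:
  assumes lim: "F_tendsto Nm (\<lambda>K. \<Sum>n<K. (A ^^ m) (summand n)) g" and m: "m \<in> E k"
  shows "Nm (g - y k) \<le> 4 * (1/2)^k"
proof (rule F_tendsto_limit_le[OF F_norm lim])
  fix K assume K: "K \<ge> Suc m"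
  let ?U = "\<Union>l. E l"
  have far: "N (max (label n) k) \<le> (if n < m then m - n else n - m)"
    if n: "n \<in> ?U" and "n \<noteq> m" for n
  proof -
    obtain l where l: "n \<in> E l" using n by auto
    have "n + N l + N k \<le> m \<or> m + N l + N k \<le> n" by (rule E_far_apart[OF l m \<open>n \<noteq> m\<close>])
    moreover have "N (max l k) \<le> N l + N k" by (simp add: max_def)
    ultimately show ?thesis using label_eq[OF l] by auto
  qed
  let ?a = "\<Sum>n\<in>{..<m} \<inter> ?U. (A ^^ (m - n)) (y (label n))"
  let ?b = "\<Sum>n\<in>{Suc m..<K} \<inter> ?U. (B ^^ (n - m)) (y (label n))"
  have "(\<Sum>n<K. (A ^^ m) (summand n)) = (\<Sum>n<m. (A ^^ m) (summand n)) +
      ((A ^^ m) (summand m) + (\<Sum>n\<in>{Suc m..<K}. (A ^^ m) (summand n)))"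
    using K sum.atLeastLessThan_concat[of 0 m K "\<lambda>n. (A ^^ m) (summand n)"]
    by (simp add: lessThan_atLeast0 sum.atLeast_Suc_lessThan)
  moreover have "(A ^^ m) (summand m) = y k" using m label_eq[OF m] by (auto simp: pow_summand)
  moreover have "(\<Sum>n<m. (A ^^ m) (summand n)) = ?a" by (rule sum_pow_summand_below) auto
  moreover have "(\<Sum>n\<in>{Suc m..<K}. (A ^^ m) (summand n)) = ?b"
    by (rule sum_pow_summand_above) auto
  ultimately have "Nm ((\<Sum>n<K. (A ^^ m) (summand n)) - y k) = Nm (?a + ?b)" by simp
  also have "\<dots> \<le> Nm ?a + Nm ?b" by (rule F_norm_triangle[OF F_norm])
  also have "Nm ?a \<le> 2 * (1/2)^k"
  proof (rule sum_labelled_tails_le[OF F_norm tails_A])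
    show "inj_on (\<lambda>n. m - n) ({..<m} \<inter> ?U)" by (auto simp: inj_on_def)
    show "N (max (label n) k) \<le> m - n" if "n \<in> {..<m} \<inter> ?U" for n
      using far[of n] that by auto
  qed auto
  also have "Nm ?b \<le> 2 * (1/2)^k"
  proof (rule sum_labelled_tails_le[OF F_norm tails_B])
    show "inj_on (\<lambda>n. n - m) ({Suc m..<K} \<inter> ?U)" by (auto simp: inj_on_def)
    show "N (max (label n) k) \<le> n - m" if "n \<in> {Suc m..<K} \<inter> ?U" for n
      using far[of n] that by auto
  qed auto
  finally show "Nm ((\<Sum>n<K. (A ^^ m) (summand n)) - y k) \<le> 4 * (1/2)^k" by simp
qed

lemma approximating_orbit:
  assumes closed: "\<And>r. r \<ge> 1 \<Longrightarrow> closed_op Nm (pow_dom D A r) (A ^^ r)"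
  obtains f where "f \<in> inf_dom D A" and "\<And>m k. m \<in> E k \<Longrightarrow> Nm ((A ^^ m) f - y k) \<le> 4 * (1/2)^k"
proof -
  obtain g where g: "\<And>m. F_tendsto Nm (\<lambda>K. \<Sum>n<K. (A ^^ m) (summand n)) (g m)"
    using pow_partial_sums_convergent by metis
  have pow_g: "g 0 \<in> pow_dom D A m \<and> (A ^^ m) (g 0) = g m" if "m \<ge> 1" for m
  proof -
    have "(\<Sum>n<K. summand n) \<in> pow_dom D A m" for K
      using funpow_sum_inf_dom(2)[OF linear, where v=summand, OF summand_inf_dom]
        inf_dom_subset_pow_dom[of D A m] by blast
    moreover have "F_tendsto Nm (\<lambda>K. (A ^^ m) (\<Sum>n<K. summand n)) (g m)"
      using g[of m] by (simp add: funpow_sum_inf_dom(1)[OF linear, where v=summand, OF summand_inf_dom])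
    ultimately show ?thesis
      using closed[OF that, unfolded closed_op_def, rule_format, of "\<lambda>K. \<Sum>n<K. summand n"] g[of 0]
      by simp
  qed
  show ?thesis
  proof (rule that[of "g 0"])
    show "g 0 \<in> inf_dom D A" using pow_g[of "Suc _"] by (auto simp: inf_dom_iff pow_dom_def)
    fix m k assume m: "m \<in> E k"
    then have "m \<ge> 1" using E_ge[OF m] N_gt[of k] by simp
    then show "Nm ((A ^^ m) (g 0) - y k) \<le> 4 * (1/2)^k"
      using pow_g pow_partial_sums_limit_near[OF g m] by simp
  qed
qed

end

lemma separated_orbit_separated_set:
  fixes Nm :: "'a::real_vector \<Rightarrow> real"
  assumes "F_space Nm" and "linear_op D A" and "X0 \<subseteq> inf_dom D A"
    and "\<And>x. x \<in> X0 \<Longrightarrow> B x \<in> X0" and "\<And>x. x \<in> X0 \<Longrightarrow> A (B x) = x" and "\<And>j. y j \<in> X0"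
    and "mono NA" and "mono NB" and NA_gt: "\<And>k. k < NA k"
    and tails_A: "\<And>j k G. j \<le> k \<Longrightarrow> finite G \<Longrightarrow> G \<subseteq> {NA k..} \<Longrightarrow>
                    Nm (\<Sum>n\<in>G. (A ^^ n) (y j)) < (1/2)^(k + j)"
    and tails_B: "\<And>j k G. j \<le> k \<Longrightarrow> finite G \<Longrightarrow> G \<subseteq> {NB k..} \<Longrightarrow>
                    Nm (\<Sum>n\<in>G. (B ^^ n) (y j)) < (1/2)^(k + j)"
  shows "separated_orbit Nm D A B X0 y (\<lambda>k. NA k + NB k) (separated_set (\<lambda>k. NA k + NB k))"
proof
  let ?N = "\<lambda>k. NA k + NB k"
  show "Nm (\<Sum>n\<in>G. (A ^^ n) (y j)) < (1/2)^(k + j)"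
    if "j \<le> k" "finite G" "G \<subseteq> {NA k + NB k..}" for j k G
    using that(3) by (intro tails_A[OF that(1,2)]) auto
  show "Nm (\<Sum>n\<in>G. (B ^^ n) (y j)) < (1/2)^(k + j)"
    if "j \<le> k" "finite G" "G \<subseteq> {NA k + NB k..}" for j k G
    using that(3) by (intro tails_B[OF that(1,2)]) auto
  show N_gt: "k < NA k + NB k" for k using NA_gt[of k] by simp
  show "separated_set ?N k \<inter> separated_set ?N j = {}" if "k \<noteq> j" for k j
    using that by (intro separated_set_disjoint) (rule le_less_trans[OF le0 N_gt])
  have "mono ?N" using \<open>mono NA\<close> \<open>mono NB\<close> by (intro monoI add_mono) (auto dest: monoD)
  then show "n + ?N k + ?N j \<le> m \<or> m + ?N k + ?N j \<le> n"
    if "n \<in> separated_set ?N k" "m \<in> separated_set ?N j" "n \<noteq> m" for k j n m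
    using that by (rule separated_set_far_apart)
qed (fact assms separated_set_ge)+

lemma freq_hypercyclic_if_approximating_orbit:
  fixes Nm :: "'a::real_vector \<Rightarrow> real"
  assumes Fn: "F_norm Nm" and f: "f \<in> inf_dom D A"
    and dense: "\<And>x e i. e > 0 \<Longrightarrow> \<exists>k\<ge>i. Nm (x - y k) < e"
    and density: "\<And>k. 0 < lower_density (E k)"
    and near: "\<And>m k. m \<in> E k \<Longrightarrow> Nm ((A ^^ m) f - y k) \<le> 4 * (1/2)^k"
  shows "freq_hypercyclic Nm D A"
  unfolding freq_hypercyclic_def
proof (intro bexI[of _ f] conjI allI impI)
  show "f \<in> D" and "(A ^^ n) f \<in> D" for n
    using f inf_dom_iff[of f D A] by (metis funpow_0)+
  fix W assume "F_open Nm W \<and> W \<noteq> {}"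
  then obtain x0 e where "e > 0" and W: "\<And>z. Nm (z - x0) < e \<Longrightarrow> z \<in> W"
    unfolding F_open_def by blast
  obtain i where i: "(1/2::real)^i < e/8"
    using real_arch_pow_inv[of "e/8" "1/2::real"] \<open>e > 0\<close> by auto
  obtain k where "k \<ge> i" and k: "Nm (x0 - y k) < e/2" using dense \<open>e > 0\<close> half_gt_zero by blast
  have "(1/2::real)^k \<le> (1/2)^i" using \<open>k \<ge> i\<close> by (rule power_decreasing) auto
  have "E k \<subseteq> {n. (A ^^ n) f \<in> W}"
  proof
    fix m assume "m \<in> E k"
    have "Nm ((A ^^ m) f - x0) \<le> Nm ((A ^^ m) f - y k) + Nm (y k - x0)"
      by (rule F_norm_triangle_diff[OF Fn])
    also have "\<dots> < e"
      using near[OF \<open>m \<in> E k\<close>] k F_norm_commute[OF Fn, of x0 "y k"] i \<open>(1/2::real)^k \<le> (1/2)^i\<close>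
      by linarith
    finally show "m \<in> {n. (A ^^ n) f \<in> W}" using W by simp
  qed
  then show "0 < lower_density {n. (A ^^ n) f \<in> W}"
    using lower_density_mono density[of k] by (meson less_le_trans)
qed

theorem theorem2p1:
  fixes Nm :: "'a::real_vector \<Rightarrow> real"
    and D :: "'a set" and A :: "'a \<Rightarrow> 'a"
    and X0 :: "'a set" and B :: "'a \<Rightarrow> 'a"
  assumes "F_space Nm" and "F_separable Nm"
    and "linear_op D A" and "F_dense Nm D" and "closed_op Nm D A"
    and "\<And>r. r \<ge> 1 \<Longrightarrow> closed_op Nm (pow_dom D A r) (A ^^ r)"
    and "X0 \<subseteq> inf_dom D A" and "F_dense Nm X0"
    and "\<And>x. x \<in> X0 \<Longrightarrow> B x \<in> X0"
    and "\<And>x. x \<in> X0 \<Longrightarrow> A (B x) = x"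
    and "\<And>x. x \<in> X0 \<Longrightarrow> uncond_conv Nm (\<lambda>n. (A ^^ n) x)"
    and "\<And>x. x \<in> X0 \<Longrightarrow> uncond_conv Nm (\<lambda>n. (B ^^ n) x)"
  shows "freq_hypercyclic Nm D A"
proof -
  have Fn: "F_norm Nm" using assms(1) by (rule F_space_F_norm)
  obtain y :: "nat \<Rightarrow> 'a" where y: "\<And>k. y k \<in> X0"
    and dense: "\<And>x e i. e > 0 \<Longrightarrow> \<exists>k\<ge>i. Nm (x - y k) < e"
    using F_separable_dense_sequence[OF Fn assms(2,8)] by blast
  obtain NA where "mono NA" and NA_gt: "\<And>k. k < NA k"
    and tails_A: "\<And>j k G. j \<le> k \<Longrightarrow> finite G \<Longrightarrow> G \<subseteq> {NA k..} \<Longrightarrow>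
                    Nm (\<Sum>n\<in>G. (A ^^ n) (y j)) < (1/2)^(k + j)"
    using uncond_conv_uniform_tails[of Nm "\<lambda>j n. (A ^^ n) (y j)", OF assms(11)[OF y]] by blast
  obtain NB where "mono NB" and "\<And>k. k < NB k"
    and tails_B: "\<And>j k G. j \<le> k \<Longrightarrow> finite G \<Longrightarrow> G \<subseteq> {NB k..} \<Longrightarrow>
                    Nm (\<Sum>n\<in>G. (B ^^ n) (y j)) < (1/2)^(k + j)"
    using uncond_conv_uniform_tails[of Nm "\<lambda>j n. (B ^^ n) (y j)", OF assms(12)[OF y]] by blast
  interpret separated_orbit Nm D A B X0 y "\<lambda>k. NA k + NB k" "separated_set (\<lambda>k. NA k + NB k)"
    using assms(1,3,7,9,10) y \<open>mono NA\<close> \<open>mono NB\<close> NA_gt tails_A tails_B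
    by (rule separated_orbit_separated_set)
  obtain f where "f \<in> inf_dom D A" and "\<And>m k. m \<in> separated_set (\<lambda>k. NA k + NB k) k \<Longrightarrow>
      Nm ((A ^^ m) f - y k) \<le> 4 * (1/2)^k"
    using approximating_orbit[OF assms(6)] by blast
  then show ?thesis
    using Fn dense lower_density_separated_set
    by (intro freq_hypercyclic_if_approximating_orbit[where y = y and E = "separated_set _"])
qed

end
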